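(* Let $f\colon \mathcal{X}\times\mathcal{Y}\to\{0,1\}$ be a function and let $\mu$ be a distribution on $\mathcal{X}\times\mathcal{Y}$ with $\mathrm{supp}(\mu)\subseteq f^{-1}(1)$. Then \[ \mathrm{IC}^{\mathrm{external},1}_{\mu}[f,0]\ \le\ \lim_{q\to\infty}\frac{1}{q}\,\mathrm{CC}^{1^q}_{\mu^q}[f^q,0]. \]
   Context: All logarithms are base 2; all random variables have finite support. For a function $g$ on $\mathcal{X}\times\mathcal{Y}$ and an output value $a$, an $a$-proof for $g$ consists of a random message $M=M(X,Y)$ (a distribution over finite binary strings $m$ for each input $(x,y)$) together with acceptance functions $\mathrm{Acc}_A(x,m)\in\{0,1\}$ and $\mathrm{Acc}_B(y,m)\in\{0,1\}$ such that for all $(x,y)$: (i) if $g(x,y)=a$ then for every $m$ with $\Pr[M=m\mid (x,y)]>0$ we have $\mathrm{Acc}_A(x,m)=1$ and $\mathrm{Acc}_B(y,m)=1$; (ii) if $g(x,y)\ne a$ then for every $m$, $\mathrm{Acc}_A(x,m)=0$ or $\mathrm{Acc}_B(y,m)=0$. For $q\in\mathbb{N}$, $f^q$ is the function on $(\mathcal{X}^q\times\mathcal{Y}^q)$ mapping $((x_1,\dots,x_q),(y_1,\dots,y_q))$ to $(f(x_1,y_1),\dots,f(x_q,y_q))$, and $\mu^q$ is the product distribution (the $q$ pairs $(x_i,y_i)$ are i.i.d. from $\mu$). Define $\mathrm{CC}^{1^q}_{\mu^q}[f^q,0]=\inf\{\mathbb{E}_{(x,y)\sim\mu^q,\,m\sim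 M|_{(x,y)}}|m| : M \text{ a } 1^q\text{-proof for } f^q\}$, where $1^q$ is the all-ones output and $|m|$ is the length of $m$, and $\mathrm{IC}^{\mathrm{external},1}_{\mu}[f,0]=\inf\{I(XY;M): M \text{ a } 1\text{-proof for } f\}$, with $(X,Y)\sim\mu$ and $M\sim M|_{(X,Y)}$, and $I$ denoting mutual information. *)

theory Defs
  imports "HOL-Probability.Probability"
begin

(* A (nondeterministic, randomized) a-proof for g on the input domain A x B.  Acceptance values {0,1} are rendered as bool. *)
definition is_proof ::
  "'a set \<Rightarrow> 'b set \<Rightarrow> ('a \<Rightarrow> 'b \<Rightarrow> 'c) \<Rightarrow> 'c \<Rightarrow>
   ('a \<Rightarrow> 'b \<Rightarrow> bool list pmf) \<Rightarrow> ('a \<Rightarrow> bool list \<Rightarrow> bool) \<Rightarrow> ('b \<Rightarrow> bool list \<Rightarrow> bool) \<Rightarrow> bool"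
where
  "is_proof A B g a M AccA AccB \<longleftrightarrow>
     (\<forall>x\<in>A. \<forall>y\<in>B.
        finite (set_pmf (M x y)) \<and>
        (g x y = a \<longrightarrow> (\<forall>m\<in>set_pmf (M x y). AccA x m \<and> AccB y m)) \<and>
        (g x y \<noteq> a \<longrightarrow> (\<forall>m. \<not> AccA x m \<or> \<not> AccB y m)))"

definition joint_pmf :: "('a \<times> 'b) pmf \<Rightarrow> ('a \<Rightarrow> 'b \<Rightarrow> 'm pmf) \<Rightarrow> (('a \<times> 'b) \<times> 'm) pmf" where
  "joint_pmf mu M = bind_pmf mu (\<lambda>(x, y). map_pmf (\<lambda>m. ((x, y), m)) (M x y))"

definition mutual_info_pmf :: "('u \<times> 'v) pmf \<Rightarrow> real" where
  "mutual_info_pmf J =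
     (\<Sum>(u, v)\<in>set_pmf J. pmf J (u, v) *
        log 2 (pmf J (u, v) / (pmf (map_pmf fst J) u * pmf (map_pmf snd J) v)))"

definition IC_ext1 :: "('x \<Rightarrow> 'y \<Rightarrow> bool) \<Rightarrow> ('x \<times> 'y) pmf \<Rightarrow> real" where
  "IC_ext1 f mu = Inf {mutual_info_pmf (joint_pmf mu M) | M AccA AccB.
                         is_proof UNIV UNIV f True M AccA AccB}"

(* f^q on X^q x Y^q (tuples as lists of length q) *)
definition fpow :: "('x \<Rightarrow> 'y \<Rightarrow> 'c) \<Rightarrow> 'x list \<Rightarrow> 'y list \<Rightarrow> 'c list" where
  "fpow f xs ys = map (\<lambda>(x, y). f x y) (zip xs ys)"

(* mu^q: q i.i.d. pairs, rearranged as ((x_1..x_q),(y_1..y_q)) *)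
definition pmf_pow :: "('x \<times> 'y) pmf \<Rightarrow> nat \<Rightarrow> ('x list \<times> 'y list) pmf" where
  "pmf_pow mu q = map_pmf (\<lambda>zs. (map fst zs, map snd zs)) (replicate_pmf q mu)"

definition CC_pow :: "('x \<Rightarrow> 'y \<Rightarrow> bool) \<Rightarrow> ('x \<times> 'y) pmf \<Rightarrow> nat \<Rightarrow> real" where
  "CC_pow f mu q = Inf {measure_pmf.expectation (joint_pmf (pmf_pow mu q) M) (\<lambda>(_, m). real (length m))
                       | M AccA AccB.
                         is_proof {xs. length xs = q} {ys. length ys = q} (fpow f) (replicate q True)
                                  M AccA AccB}"

end

theory Submission
  imports Defs
begin

text \<open>
  Given a proof for \<open>f\<^sup>q\<close> and an input \<open>(x, y)\<close> with \<open>f x y\<close>, plant \<open>(x, y)\<close> at a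
  uniformly random position \<open>j\<close> among \<open>q - 1\<close> fresh samples from \<open>\<mu>\<close>. Since the support of
  \<open>\<mu>\<close> lies in \<open>f\<^sup>-\<^sup>1(1)\<close>, the padded instance is again a \<open>1\<^sup>q\<close>-instance, so the \<open>q\<close>-fold
  message prefixed by \<open>j\<close> in unary is a \<open>1\<close>-proof for \<open>f\<close>. Its external information is the
  average over \<open>j\<close> of \<open>I(Z\<^sub>j; M)\<close>. Gibbs' inequality against the sub-probability
  \<open>w(m) \<Prod>\<^sub>j P(z\<^sub>j | m)\<close> with the Kraft-type weight \<open>w(m) = (1 - 2t) t\<^bsup>|m|\<^esup>\<close> bounds the sum of
  these informations by \<open>log(1/t) E|M| - log(1 - 2t)\<close>. Dividing by \<open>q\<close> and letting first
  \<open>q \<rightarrow> \<infinity>\<close> and then \<open>t \<rightarrow> 1/2\<close> gives the bound.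

  The limit exists because two proofs can be concatenated after encoding the first message
  with a prefix-free block code of length at most \<open>(1 + 1/b) |m| + 2b\<close>; hence \<open>CC(p + r) \<le>
  (1 + 1/b) CC(p) + 2b + CC(r)\<close> for every \<open>b\<close>, and a Fekete-type argument applies.
\<close>

section \<open>Information inequalities\<close>

lemma sum_pmf_le_1: "finite A \<Longrightarrow> sum (pmf p) A \<le> 1"
  by (metis measure_measure_pmf_finite measure_pmf.prob_le_1)

lemma log_prod:
  assumes "finite I" "\<And>i. i \<in> I \<Longrightarrow> f i > 0"
  shows "log b (prod f I) = (\<Sum>i\<in>I. log b (f i))"
  unfolding log_def using assms
  by (subst ln_prod) (auto simp: sum_divide_distrib dest: less_imp_neq[symmetric])

lemma expectation_log_ratio_nonpos:
  fixes J :: "'s pmf"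
  assumes fin: "finite (set_pmf J)"
    and pos: "\<And>s. s \<in> set_pmf J \<Longrightarrow> R s > 0"
    and sum: "sum R (set_pmf J) \<le> 1"
  shows "measure_pmf.expectation J (\<lambda>s. log 2 (R s / pmf J s)) \<le> 0"
proof -
  have "pmf J s * ln (R s / pmf J s) \<le> R s - pmf J s" if s: "s \<in> set_pmf J" for s
  proof -
    have J: "pmf J s > 0" using s by (simp add: pmf_positive)
    have "pmf J s * ln (R s / pmf J s) \<le> pmf J s * (R s / pmf J s - 1)"
      using J pos[OF s] by (intro mult_left_mono ln_le_minus_one) auto
    also have "\<dots> = R s - pmf J s" using J by (simp add: field_simps)
    finally show ?thesis .
  qed
  then have "(\<Sum>s\<in>set_pmf J. pmf J s * ln (R s / pmf J s)) \<le> (\<Sum>s\<in>set_pmf J. R s - pmf J s)"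
    by (rule sum_mono)
  also have "\<dots> \<le> 0" using sum fin by (simp add: sum_subtractf sum_pmf_eq_1)
  finally have "(\<Sum>s\<in>set_pmf J. pmf J s * ln (R s / pmf J s)) / ln 2 \<le> 0"
    by (simp add: divide_nonpos_pos)
  then show ?thesis
    using fin by (simp add: integral_measure_pmf_real log_def sum_divide_distrib mult.commute)
qed

lemma mutual_info_pmf_eq_expectation:
  assumes "finite (set_pmf J)"
  shows "mutual_info_pmf J = measure_pmf.expectation J
     (\<lambda>(u, v). log 2 (pmf J (u, v) / (pmf (map_pmf fst J) u * pmf (map_pmf snd J) v)))"
  unfolding mutual_info_pmf_def
  by (subst integral_measure_pmf_real[OF assms])
    (auto simp: case_prod_unfold mult.commute intro!: sum.cong)

lemma mutual_info_pmf_nonneg: "mutual_info_pmf J \<ge> 0"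
proof (cases "finite (set_pmf J)")
  case False
  then show ?thesis by (simp add: mutual_info_pmf_def)
next
  case fin: True
  define S where "S = set_pmf J"
  define R where "R = (\<lambda>(u, v). pmf (map_pmf fst J) u * pmf (map_pmf snd J) v)"
  have pos: "R s > 0" if "s \<in> S" for s
  proof -
    obtain u v where s: "s = (u, v)" by force
    have "u \<in> set_pmf (map_pmf fst J)" "v \<in> set_pmf (map_pmf snd J)"
      using that s S_def by force+
    then show ?thesis by (simp add: R_def s pmf_positive)
  qed
  have "sum R S \<le> sum R (fst ` S \<times> snd ` S)"
    using fin pos by (intro sum_mono2) (force simp: R_def S_def)+
  also have "\<dots> = sum (pmf (map_pmf fst J)) (fst ` S) * sum (pmf (map_pmf snd J)) (snd ` S)"
    by (simp add: R_def sum_product sum.cartesian_product)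
  also have "\<dots> \<le> 1"
    using fin by (intro mult_le_one sum_pmf_le_1 sum_nonneg) (auto simp: S_def)
  finally have "measure_pmf.expectation J (\<lambda>s. log 2 (R s / pmf J s)) \<le> 0"
    using fin pos by (intro expectation_log_ratio_nonpos) (auto simp: S_def)
  moreover have "mutual_info_pmf J = - measure_pmf.expectation J (\<lambda>s. log 2 (R s / pmf J s))"
    unfolding mutual_info_pmf_eq_expectation[OF fin] integral_minus[symmetric]
    using pos by (intro integral_cong_AE)
      (auto simp: AE_measure_pmf_iff R_def S_def pmf_positive log_divide)
  ultimately show ?thesis by simp
qed

lemma mutual_info_pmf_map_snd_inj:
  assumes "inj g"
  shows "mutual_info_pmf (map_pmf (\<lambda>(u, v). (u, g v)) J) = mutual_info_pmf J"
proof -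
  let ?h = "\<lambda>(u, v). (u, g v)"
  have inj_h: "inj ?h" using assms by (auto simp: inj_def)
  have fst: "map_pmf fst (map_pmf ?h J) = map_pmf fst J"
    and snd: "map_pmf snd (map_pmf ?h J) = map_pmf g (map_pmf snd J)"
    by (simp_all add: map_pmf_comp case_prod_unfold)
  have "pmf (map_pmf ?h J) (u, g v) = pmf J (u, v)" for u v
    using pmf_map_inj'[OF inj_h, of J "(u, v)"] by simp
  moreover have "pmf (map_pmf g (map_pmf snd J)) (g v) = pmf (map_pmf snd J) v" for v
    using pmf_map_inj'[OF assms] by simp
  ultimately show ?thesis
    unfolding mutual_info_pmf_def set_map_pmf fst snd
    by (subst sum.reindex[OF inj_on_subset[OF inj_h subset_UNIV]])
      (auto simp: o_def intro!: sum.cong)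
qed

lemma pmf_mixture_tagged:
  assumes I: "finite I" "j \<in> I"
    and inj: "inj (g j)" and disj: "\<And>i s s'. i \<in> I \<Longrightarrow> g i s = g j s' \<Longrightarrow> i = j"
  shows "pmf (bind_pmf (pmf_of_set I) (\<lambda>i. map_pmf (g i) (D i))) (g j s) = pmf (D j) s / card I"
proof -
  have "pmf (map_pmf (g i) (D i)) (g j s) = (if i = j then pmf (D j) s else 0)" if "i \<in> I" for i
  proof (cases "i = j")
    case False
    then have "g j s \<notin> g i ` set_pmf (D i)" using disj[OF that, of _ s] by (metis imageE)
    then show ?thesis using False by (simp add: pmf_map_outside)
  qed (simp add: pmf_map_inj'[OF inj])
  then have "(\<Sum>i\<in>I. pmf (map_pmf (g i) (D i)) (g j s)) = (\<Sum>i\<in>I. if i = j then pmf (D j) s else 0)"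
    by (rule sum.cong[OF refl])
  then show ?thesis using I by (subst pmf_bind_pmf_of_set) auto
qed

lemma mutual_info_pmf_mixture:
  fixes D :: "'j \<Rightarrow> ('z \<times> 'm) pmf"
  assumes I: "finite I" "I \<noteq> {}"
    and fin: "\<And>j. j \<in> I \<Longrightarrow> finite (set_pmf (D j))"
    and marg: "\<And>j. j \<in> I \<Longrightarrow> map_pmf fst (D j) = mu"
  shows "mutual_info_pmf (bind_pmf (pmf_of_set I) (\<lambda>j. map_pmf (\<lambda>(z, m). (z, (j, m))) (D j)))
       = (\<Sum>j\<in>I. mutual_info_pmf (D j)) / card I"
proof -
  define e where "e j = (\<lambda>(z::'z, m::'m). (z, (j::'j, m)))" for j
  define J where "J = bind_pmf (pmf_of_set I) (\<lambda>j. map_pmf (e j) (D j))"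
  have inj_e: "inj (e j)" for j by (auto simp: e_def inj_def)
  have pmf_J: "pmf J (z, (j, m)) = pmf (D j) (z, m) / card I" if "j \<in> I" for z j m
    using pmf_mixture_tagged[OF I(1) that inj_e, where s="(z, m)" and D=D] by (auto simp: J_def e_def)
  have "map_pmf fst J = bind_pmf (pmf_of_set I) (\<lambda>j. map_pmf fst (D j))"
    by (simp add: J_def map_bind_pmf map_pmf_comp e_def case_prod_unfold)
  also have "\<dots> = bind_pmf (pmf_of_set I) (\<lambda>_. mu)"
    using I marg by (intro bind_pmf_cong) auto
  finally have fst_J: "map_pmf fst J = mu" by (simp add: bind_pmf_const)
  have "map_pmf snd J = bind_pmf (pmf_of_set I) (\<lambda>j. map_pmf (Pair j) (map_pmf snd (D j)))"
    by (simp add: J_def map_bind_pmf map_pmf_comp e_def case_prod_unfold)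
  then have pmf_snd_J: "pmf (map_pmf snd J) (j, m) = pmf (map_pmf snd (D j)) m / card I"
    if "j \<in> I" for j m
    using pmf_mixture_tagged[OF I(1) that, of Pair] by (simp add: inj_def)
  define \<phi> where "\<phi> = (\<lambda>(u, v). log 2 (pmf J (u, v) / (pmf (map_pmf fst J) u * pmf (map_pmf snd J) v)))"
  have "mutual_info_pmf J = measure_pmf.expectation J \<phi>"
    unfolding \<phi>_def using I fin by (intro mutual_info_pmf_eq_expectation) (auto simp: J_def)
  also have "\<dots> = (\<Sum>j\<in>I. measure_pmf.expectation (map_pmf (e j) (D j)) \<phi> / card I)"
    unfolding J_def using I fin by (subst pmf_expectation_bind_pmf_of_set) (auto simp: divide_inverse_commute)
  also have "\<dots> = (\<Sum>j\<in>I. mutual_info_pmf (D j) / card I)"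
  proof (intro sum.cong refl)
    fix j assume j: "j \<in> I"
    have "card I > 0" using I by (simp add: card_gt_0_iff)
    then have "measure_pmf.expectation (map_pmf (e j) (D j)) \<phi> = measure_pmf.expectation (D j)
         (\<lambda>(u, v). log 2 (pmf (D j) (u, v) / (pmf (map_pmf fst (D j)) u * pmf (map_pmf snd (D j)) v)))"
      by (auto simp: \<phi>_def e_def case_prod_unfold pmf_J[OF j] pmf_snd_J[OF j] fst_J marg[OF j]
          intro!: integral_cong)
    also have "\<dots> = mutual_info_pmf (D j)" using fin[OF j] by (rule mutual_info_pmf_eq_expectation[symmetric])
    finally show "measure_pmf.expectation (map_pmf (e j) (D j)) \<phi> / card I = mutual_info_pmf (D j) / card I"
      by simp
  qed
  finally show ?thesis by (simp add: J_def e_def sum_divide_distrib)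
qed

section \<open>Lists of independent samples and their coordinates\<close>

lemma set_pmf_replicate_pmfD:
  "xs \<in> set_pmf (replicate_pmf n p) \<Longrightarrow> length xs = n \<and> set xs \<subseteq> set_pmf p"
  by (auto simp: set_replicate_pmf)

lemma finite_set_pmf_replicate_pmf: "finite (set_pmf (replicate_pmf n (p :: 'a::finite pmf)))"
  by (rule finite_subset[OF _ finite_list_length[of n]]) (auto simp: set_replicate_pmf)

lemma pmf_replicate_pmf:
  "length zs = n \<Longrightarrow> pmf (replicate_pmf n p) zs = (\<Prod>j<n. pmf p (zs ! j))"
proof (induction n arbitrary: zs)
  case 0
  then show ?case by simp
next
  case (Suc n)
  then obtain z zs' where zs: "zs = z # zs'" "length zs' = n" by (auto simp: length_Suc_conv)
  have inj: "inj (\<lambda>(x::'a, xs). x # xs)" by (auto simp: inj_def)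
  have "replicate_pmf (Suc n) p = map_pmf (\<lambda>(x, xs). x # xs) (pair_pmf p (replicate_pmf n p))"
    by (simp add: pair_pmf_def map_pmf_def bind_assoc_pmf bind_return_pmf)
  then have "pmf (replicate_pmf (Suc n) p) zs = pmf (pair_pmf p (replicate_pmf n p)) (z, zs')"
    using pmf_map_inj'[OF inj, of _ "(z, zs')"] by (simp add: zs)
  then show ?case
    by (simp add: pmf_pair Suc.IH zs prod.lessThan_Suc_shift del: prod.lessThan_Suc)
qed

lemma map_pmf_nth_replicate_pmf: "j < n \<Longrightarrow> map_pmf (\<lambda>zs. zs ! j) (replicate_pmf n p) = p"
proof (induction n arbitrary: j)
  case 0
  then show ?case by simp
next
  case (Suc n)
  then show ?case
    by (cases j) (simp_all add: map_pmf_def bind_assoc_pmf bind_return_pmf bind_return_pmf' bind_pmf_const)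
qed

lemma map_pmf_take_replicate_pmf: "map_pmf (take p) (replicate_pmf (p + r) mu) = replicate_pmf p mu"
proof -
  have "map_pmf (take p) (replicate_pmf (p + r) mu)
      = bind_pmf (replicate_pmf p mu) (\<lambda>xs. bind_pmf (replicate_pmf r mu) (\<lambda>ys. return_pmf (take p (xs @ ys))))"
    by (simp add: replicate_pmf_distrib map_bind_pmf)
  also have "\<dots> = bind_pmf (replicate_pmf p mu) (\<lambda>xs. bind_pmf (replicate_pmf r mu) (\<lambda>_. return_pmf xs))"
    by (intro bind_pmf_cong refl) (auto dest: set_pmf_replicate_pmfD)
  finally show ?thesis by (simp add: bind_pmf_const bind_return_pmf')
qed

lemma map_pmf_drop_replicate_pmf: "map_pmf (drop p) (replicate_pmf (p + r) mu) = replicate_pmf r mu"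
proof -
  have "map_pmf (drop p) (replicate_pmf (p + r) mu)
      = bind_pmf (replicate_pmf p mu) (\<lambda>xs. bind_pmf (replicate_pmf r mu) (\<lambda>ys. return_pmf (drop p (xs @ ys))))"
    by (simp add: replicate_pmf_distrib map_bind_pmf)
  also have "\<dots> = bind_pmf (replicate_pmf p mu) (\<lambda>_. bind_pmf (replicate_pmf r mu) return_pmf)"
    by (intro bind_pmf_cong refl) (auto dest: set_pmf_replicate_pmfD)
  finally show ?thesis by (simp add: bind_pmf_const bind_return_pmf')
qed

definition insert_at :: "nat \<Rightarrow> 'a \<Rightarrow> 'a list \<Rightarrow> 'a list" where
  "insert_at j z ws = take j ws @ z # drop j ws"

lemma length_insert_at [simp]: "j \<le> length ws \<Longrightarrow> length (insert_at j z ws) = Suc (length ws)"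
  by (simp add: insert_at_def)

lemma nth_insert_at [simp]: "j \<le> length ws \<Longrightarrow> insert_at j z ws ! j = z"
  by (simp add: insert_at_def nth_append)

lemma set_insert_at [simp]: "set (insert_at j z ws) = insert z (set ws)"
  by (metis insert_at_def append_take_drop_id set_append set_simps(2) Un_insert_right Un_commute)

lemma replicate_pmf_insert_at:
  "j \<le> n \<Longrightarrow> replicate_pmf (Suc n) p
     = bind_pmf p (\<lambda>z. map_pmf (insert_at j z) (replicate_pmf n p))"
proof (induction n arbitrary: j)
  case 0
  then show ?case by (simp add: insert_at_def map_pmf_def)
next
  case (Suc n)
  show ?case
  proof (cases j)
    case 0
    then show ?thesis by (simp add: insert_at_def map_pmf_def)
  next
    case (Suc j')
    then have "j' \<le> n" using Suc.prems by simp
    have "replicate_pmf (Suc (Suc n)) p = bind_pmf p (\<lambda>a. map_pmf ((#) a) (replicate_pmf (Suc n) p))"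
      by (simp add: map_pmf_def)
    also have "\<dots> = bind_pmf p (\<lambda>a. bind_pmf p (\<lambda>z. map_pmf (\<lambda>ws. a # insert_at j' z ws) (replicate_pmf n p)))"
      unfolding Suc.IH[OF \<open>j' \<le> n\<close>] by (simp add: map_bind_pmf map_pmf_comp)
    also have "\<dots> = bind_pmf p (\<lambda>z. bind_pmf p (\<lambda>a. map_pmf (\<lambda>ws. a # insert_at j' z ws) (replicate_pmf n p)))"
      by (rule bind_commute_pmf)
    also have "\<dots> = bind_pmf p (\<lambda>z. map_pmf (insert_at j z) (replicate_pmf (Suc n) p))"
      by (simp add: Suc insert_at_def map_pmf_def bind_assoc_pmf bind_return_pmf)
    finally show ?thesis .
  qed
qed

lemma expectation_bind_pmf_finite:
  assumes "finite (set_pmf p)" "\<And>x. x \<in> set_pmf p \<Longrightarrow> finite (set_pmf (F x))"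
  shows "measure_pmf.expectation (bind_pmf p F) (h :: _ \<Rightarrow> real)
       = measure_pmf.expectation p (\<lambda>x. measure_pmf.expectation (F x) h)"
  using assms by (simp add: pmf_expectation_bind[of "set_pmf p"] integral_measure_pmf[of "set_pmf p"])

lemma pmf_map_snd_eq_sum: "pmf (map_pmf snd K) v = (\<Sum>u\<in>UNIV. pmf K (u :: 'u::finite, v))"
proof -
  have "snd -` {v} = (UNIV :: 'u set) \<times> {v}" by auto
  then have "pmf (map_pmf snd K) v = sum (pmf K) (UNIV \<times> {v})"
    by (simp add: pmf_map measure_measure_pmf_finite)
  also have "\<dots> = (\<Sum>u\<in>UNIV. pmf K (u, v))"
    by (rule sum.reindex_bij_witness[of _ "\<lambda>u. (u, v)" fst]) auto
  finally show ?thesis .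
qed

lemma pmf_le_pmf_map_fst: "pmf J (a, b) \<le> pmf (map_pmf fst J) a"
proof -
  have "measure_pmf.prob J {(a, b)} \<le> measure_pmf.prob J (fst -` {a})"
    by (intro measure_pmf.finite_measure_mono) auto
  then show ?thesis by (simp add: measure_pmf_single pmf_map)
qed

lemma sum_lists_length_prod:
  "(\<Sum>zs\<in>{zs::'z::finite list. length zs = n}. \<Prod>j<n. g j (zs ! j))
     = (\<Prod>j<n. \<Sum>z\<in>UNIV. (g j z :: real))"
proof (induction n arbitrary: g)
  case 0
  then show ?case by simp
next
  case (Suc n)
  have eq: "{zs::'z list. length zs = Suc n} = (\<lambda>(z, zs). z # zs) ` (UNIV \<times> {zs. length zs = n})"
    by (auto simp: length_Suc_conv image_iff)
  have inj: "inj_on (\<lambda>(z, zs). z # zs) (UNIV \<times> {zs::'z list. length zs = n})"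
    by (auto simp: inj_on_def)
  have "(\<Sum>zs\<in>{zs::'z list. length zs = Suc n}. \<Prod>j<Suc n. g j (zs ! j))
      = (\<Sum>(z, zs)\<in>UNIV \<times> {zs::'z list. length zs = n}. g 0 z * (\<Prod>j<n. g (Suc j) (zs ! j)))"
    unfolding eq by (subst sum.reindex[OF inj])
      (simp add: case_prod_unfold prod.lessThan_Suc_shift del: prod.lessThan_Suc)
  also have "\<dots> = (\<Sum>z\<in>UNIV. g 0 z * (\<Sum>zs\<in>{zs::'z list. length zs = n}. \<Prod>j<n. g (Suc j) (zs ! j)))"
    by (simp add: sum.cartesian_product[symmetric] sum_distrib_left)
  also have "\<dots> = (\<Sum>z\<in>UNIV. g 0 z) * (\<Prod>j<n. \<Sum>z\<in>UNIV. g (Suc j) z)"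
    using Suc.IH[of "\<lambda>j. g (Suc j)"] by (simp add: sum_distrib_right)
  finally show ?case by (simp add: prod.lessThan_Suc_shift del: prod.lessThan_Suc)
qed

definition coordinate_pmf :: "nat \<Rightarrow> ('z list \<times> 'm) pmf \<Rightarrow> ('z \<times> 'm) pmf" where
  "coordinate_pmf j J = map_pmf (\<lambda>(zs, m). (zs ! j, m)) J"

lemma map_snd_coordinate_pmf [simp]: "map_pmf snd (coordinate_pmf j J) = map_pmf snd J"
  by (simp add: coordinate_pmf_def map_pmf_comp case_prod_unfold)

lemma map_fst_coordinate_pmf:
  "map_pmf fst (coordinate_pmf j J) = map_pmf (\<lambda>zs. zs ! j) (map_pmf fst J)"
  by (simp add: coordinate_pmf_def map_pmf_comp case_prod_unfold)

lemma set_pmf_fst_replicate_pmfD: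
  assumes "map_pmf fst J = replicate_pmf q mu" "(zs, m) \<in> set_pmf J"
  shows "length zs = q \<and> set zs \<subseteq> set_pmf mu"
proof -
  have "zs \<in> set_pmf (map_pmf fst J)" using assms(2) by force
  then show ?thesis using assms(1) by (auto simp: set_replicate_pmf in_lists_conv_set)
qed

lemma coordinate_conditional_pos:
  assumes "(zs, m) \<in> set_pmf J"
  shows "pmf (coordinate_pmf j J) (zs ! j, m) / pmf (map_pmf snd J) m > 0"
proof -
  have "(zs ! j, m) \<in> set_pmf (coordinate_pmf j J)" "m \<in> set_pmf (map_pmf snd J)"
    using assms by (force simp: coordinate_pmf_def)+
  then show ?thesis by (simp add: pmf_positive)
qed

lemma sum_coordinate_conditionals:
  fixes J :: "('z::finite list \<times> 'm) pmf"
  assumes "pmf (map_pmf snd J) m > 0"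
  shows "(\<Sum>zs\<in>{zs. length zs = q}. \<Prod>j<q. pmf (coordinate_pmf j J) (zs ! j, m) / pmf (map_pmf snd J) m)
       = 1"
proof -
  have "(\<Sum>z\<in>UNIV. pmf (coordinate_pmf j J) (z, m) / pmf (map_pmf snd J) m) = 1" for j
    using assms pmf_map_snd_eq_sum[of "coordinate_pmf j J" m]
    by (simp add: sum_divide_distrib[symmetric])
  then show ?thesis by (subst sum_lists_length_prod) simp
qed

section \<open>Coordinate information is bounded by code length\<close>

definition product_weight :: "nat \<Rightarrow> ('m \<Rightarrow> real) \<Rightarrow> ('z list \<times> 'm) pmf \<Rightarrow> 'z list \<times> 'm \<Rightarrow> real" where
  "product_weight q w J = (\<lambda>(zs, m).
     w m * (\<Prod>j<q. pmf (coordinate_pmf j J) (zs ! j, m) / pmf (map_pmf snd J) m))"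

lemma product_weight_pos:
  "(zs, m) \<in> set_pmf J \<Longrightarrow> w m > 0 \<Longrightarrow> product_weight q w J (zs, m) > 0"
  by (auto simp: product_weight_def coordinate_conditional_pos intro!: mult_pos_pos prod_pos)

lemma sum_product_weight_le:
  fixes J :: "('z::finite list \<times> 'm) pmf"
  assumes fin: "finite (set_pmf J)" and len: "\<And>zs m. (zs, m) \<in> set_pmf J \<Longrightarrow> length zs = q"
    and w: "\<And>m. w m > 0" and w_sum: "sum w (snd ` set_pmf J) \<le> 1"
  shows "sum (product_weight q w J) (set_pmf J) \<le> 1"
proof -
  define Z where "Z = {zs::'z list. length zs = q}"
  define T where "T = snd ` set_pmf J"
  have nonneg: "product_weight q w J s \<ge> 0" for s
    using w[THEN less_imp_le]
    by (cases s) (auto simp: product_weight_def intro!: mult_nonneg_nonneg prod_nonneg)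
  have "sum (product_weight q w J) (set_pmf J) \<le> sum (product_weight q w J) (Z \<times> T)"
    using fin len nonneg
    by (intro sum_mono2) (auto simp: Z_def T_def finite_list_length intro!: rev_image_eqI)
  also have "\<dots> = (\<Sum>zs\<in>Z. \<Sum>m\<in>T. product_weight q w J (zs, m))"
    by (simp add: sum.cartesian_product)
  also have "\<dots> = (\<Sum>m\<in>T. \<Sum>zs\<in>Z. product_weight q w J (zs, m))"
    by (rule sum.swap)
  also have "\<dots> = sum w T"
  proof (intro sum.cong refl)
    fix m assume "m \<in> T"
    then have "pmf (map_pmf snd J) m > 0" by (auto simp: T_def pmf_positive)
    then show "(\<Sum>zs\<in>Z. product_weight q w J (zs, m)) = w m"
      by (simp add: product_weight_def Z_def sum_distrib_left[symmetric] sum_coordinate_conditionals)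
  qed
  finally show ?thesis using w_sum by (simp add: T_def)
qed

lemma log_product_weight_ratio_ge:
  assumes marg: "map_pmf fst J = replicate_pmf q mu"
    and s: "(zs, m) \<in> set_pmf J" and w: "w m > 0"
  shows "(\<Sum>j<q. log 2 (pmf (coordinate_pmf j J) (zs ! j, m) / (pmf mu (zs ! j) * pmf (map_pmf snd J) m)))
           + log 2 (w m)
         \<le> log 2 (product_weight q w J (zs, m) / pmf J (zs, m))"
proof -
  define P where "P = (\<Prod>j<q. pmf mu (zs ! j))"
  define c where "c j = pmf (coordinate_pmf j J) (zs ! j, m) / pmf (map_pmf snd J) m" for j
  have zs: "length zs = q" "set zs \<subseteq> set_pmf mu" using set_pmf_fst_replicate_pmfD[OF marg s] by auto
  have mu_pos: "pmf mu (zs ! j) > 0" if "j < q" for j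
    using zs that by (metis nth_mem pmf_positive subsetD)
  have P_pos: "P > 0" using mu_pos by (auto simp: P_def intro!: prod_pos)
  have c_pos: "c j > 0" for j
    using coordinate_conditional_pos[OF s] by (simp add: c_def)
  have J_le_P: "pmf J (zs, m) \<le> P"
    using pmf_le_pmf_map_fst[of J zs m] marg pmf_replicate_pmf[OF zs(1)] by (simp add: P_def)
  have J_pos: "pmf J (zs, m) > 0" using s by (simp add: pmf_positive)
  have "(\<Sum>j<q. log 2 (pmf (coordinate_pmf j J) (zs ! j, m) / (pmf mu (zs ! j) * pmf (map_pmf snd J) m)))
      = (\<Sum>j<q. log 2 (c j) - log 2 (pmf mu (zs ! j)))"
  proof (intro sum.cong refl)
    fix j assume "j \<in> {..<q}"
    have "pmf (coordinate_pmf j J) (zs ! j, m) / (pmf mu (zs ! j) * pmf (map_pmf snd J) m)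
        = c j / pmf mu (zs ! j)"
      by (simp add: c_def mult.commute)
    then show "log 2 (pmf (coordinate_pmf j J) (zs ! j, m) / (pmf mu (zs ! j) * pmf (map_pmf snd J) m))
        = log 2 (c j) - log 2 (pmf mu (zs ! j))"
      using c_pos[of j] mu_pos[of j] \<open>j \<in> {..<q}\<close> by (simp add: log_divide)
  qed
  also have "\<dots> = log 2 (prod c {..<q}) - log 2 P"
  proof -
    have "log 2 (prod c {..<q}) = (\<Sum>j<q. log 2 (c j))" using c_pos by (intro log_prod) auto
    moreover have "log 2 P = (\<Sum>j<q. log 2 (pmf mu (zs ! j)))"
      unfolding P_def using mu_pos by (intro log_prod) auto
    ultimately show ?thesis by (simp add: sum_subtractf)
  qed
  also have "\<dots> = log 2 (product_weight q w J (zs, m) / P) - log 2 (w m)"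
  proof -
    have "prod c {..<q} > 0" using c_pos by (simp add: prod_pos)
    moreover have "product_weight q w J (zs, m) = w m * prod c {..<q}"
      by (simp add: product_weight_def c_def)
    ultimately show ?thesis
      using P_pos w by (simp add: log_divide log_mult del: prod_pos_nat_iff prod_zero_iff)
  qed
  finally have "(\<Sum>j<q. log 2 (pmf (coordinate_pmf j J) (zs ! j, m) / (pmf mu (zs ! j) * pmf (map_pmf snd J) m)))
       + log 2 (w m) = log 2 (product_weight q w J (zs, m) / P)"
    by simp
  also have "\<dots> \<le> log 2 (product_weight q w J (zs, m) / pmf J (zs, m))"
    using product_weight_pos[OF s, of w q] w P_pos J_pos J_le_P
    by (subst log_le_cancel_iff) (auto intro!: divide_left_mono divide_pos_pos)
  finally show ?thesis .
qed

lemma sum_mutual_info_coordinate_le: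
  fixes J :: "('z::finite list \<times> 'm) pmf"
  assumes fin: "finite (set_pmf J)" and marg: "map_pmf fst J = replicate_pmf q mu"
    and w: "\<And>m. w m > 0" and w_sum: "sum w (snd ` set_pmf J) \<le> 1"
  shows "(\<Sum>j<q. mutual_info_pmf (coordinate_pmf j J))
           \<le> measure_pmf.expectation J (\<lambda>(zs, m). - log 2 (w m))"
proof -
  define \<phi> where "\<phi> j = (\<lambda>(zs, m). log 2 (pmf (coordinate_pmf j J) (zs ! j, m)
                          / (pmf mu (zs ! j) * pmf (map_pmf snd J) m)))" for j
  have int: "integrable (measure_pmf J) g" for g :: "_ \<Rightarrow> real"
    using fin by (rule integrable_measure_pmf_finite)
  have "mutual_info_pmf (coordinate_pmf j J) = measure_pmf.expectation J (\<phi> j)" if "j < q" for j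
  proof -
    have fst: "map_pmf fst (coordinate_pmf j J) = mu"
      using marg map_pmf_nth_replicate_pmf[OF that] by (simp add: map_fst_coordinate_pmf)
    have fin_j: "finite (set_pmf (coordinate_pmf j J))" using fin by (simp add: coordinate_pmf_def)
    show ?thesis
      unfolding mutual_info_pmf_eq_expectation[OF fin_j] fst map_snd_coordinate_pmf
      by (simp add: coordinate_pmf_def \<phi>_def case_prod_unfold)
  qed
  then have "(\<Sum>j<q. mutual_info_pmf (coordinate_pmf j J))
      - measure_pmf.expectation J (\<lambda>(zs, m). - log 2 (w m))
      = measure_pmf.expectation J (\<lambda>s. (\<Sum>j<q. \<phi> j s) + log 2 (w (snd s)))"
    by (simp add: Bochner_Integration.integral_sum[OF int] Bochner_Integration.integral_add[OF int int]
        case_prod_unfold)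
  also have "\<dots> \<le> measure_pmf.expectation J (\<lambda>s. log 2 (product_weight q w J s / pmf J s))"
    using log_product_weight_ratio_ge[OF marg _ w]
    by (intro integral_mono_AE int) (auto simp: AE_measure_pmf_iff \<phi>_def)
  also have "\<dots> \<le> 0"
    using set_pmf_fst_replicate_pmfD[OF marg]
    by (intro expectation_log_ratio_nonpos fin sum_product_weight_le w w_sum)
      (auto intro: product_weight_pos w)
  finally show ?thesis by simp
qed

lemma sum_geometric_length_weight_le:
  fixes t :: real
  assumes t: "0 < t" "t < 1/2" and A: "finite (A :: bool list set)"
  shows "(\<Sum>m\<in>A. (1 - 2*t) * t ^ length m) \<le> 1"
proof -
  define N where "N = Suc (Max (length ` A))"
  define B where "B = (\<Union>L<N. {m::bool list. length m = L})"
  have "A \<subseteq> B" using A by (auto simp: B_def N_def le_imp_less_Suc)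
  then have "(\<Sum>m\<in>A. (1 - 2*t) * t ^ length m) \<le> (\<Sum>m\<in>B. (1 - 2*t) * t ^ length m)"
    using t by (intro sum_mono2) (auto simp: B_def finite_list_length)
  also have "\<dots> = (\<Sum>L<N. (1 - 2*t) * (2*t) ^ L)"
    unfolding B_def using card_lists_length_eq[of "UNIV :: bool set"]
    by (subst sum.UNION_disjoint) (auto simp: finite_list_length power_mult_distrib mult_ac)
  also have "\<dots> = 1 - (2*t) ^ N"
  proof -
    have "(\<Sum>L<N. (2*t) ^ L) = (1 - (2*t) ^ N) / (1 - 2*t)" using t by (subst sum_gp_strict) simp
    then show ?thesis using t by (simp add: sum_distrib_left[symmetric])
  qed
  also have "\<dots> \<le> 1" using t by simp
  finally show ?thesis .
qed

section \<open>Proofs for $f^q$\<close>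

lemma is_proof_finite:
  "is_proof A B g a M AccA AccB \<Longrightarrow> x \<in> A \<Longrightarrow> y \<in> B \<Longrightarrow> finite (set_pmf (M x y))"
  by (simp add: is_proof_def)

lemma fpow_eq_replicate_True_iff:
  "length xs = q \<Longrightarrow> length ys = q \<Longrightarrow> fpow f xs ys = replicate q True \<longleftrightarrow> (\<forall>i<q. f (xs ! i) (ys ! i))"
  by (auto simp: fpow_def list_eq_iff_nth_eq)

lemma all_less_add_iff: "(\<forall>i < p + (r::nat). P i) \<longleftrightarrow> (\<forall>i < p. P i) \<and> (\<forall>i < r. P (p + i))"
proof safe
  fix i assume "\<forall>i < p. P i" "\<forall>i < r. P (p + i)" "i < p + r"
  then show "P i" by (cases "i < p") (auto dest: spec[of _ "i - p"])
qed auto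

lemma fpow_eq_replicate_add_iff:
  assumes "length xs = p + r" "length ys = p + r"
  shows "fpow f xs ys = replicate (p + r) True \<longleftrightarrow>
     fpow f (take p xs) (take p ys) = replicate p True \<and> fpow f (drop p xs) (drop p ys) = replicate r True"
  using assms by (simp add: fpow_eq_replicate_True_iff all_less_add_iff)

abbreviation is_pow_proof ::
  "('x \<Rightarrow> 'y \<Rightarrow> bool) \<Rightarrow> nat \<Rightarrow> ('x list \<Rightarrow> 'y list \<Rightarrow> bool list pmf)
     \<Rightarrow> ('x list \<Rightarrow> bool list \<Rightarrow> bool) \<Rightarrow> ('y list \<Rightarrow> bool list \<Rightarrow> bool) \<Rightarrow> bool" where
  "is_pow_proof f q M AccA AccB \<equiv>
     is_proof {xs. length xs = q} {ys. length ys = q} (fpow f) (replicate q True) M AccA AccB"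

lemma exists_pow_proof:
  fixes f :: "'x::countable \<Rightarrow> 'y \<Rightarrow> bool"
  shows "\<exists>M AccA AccB. is_pow_proof f q M AccA AccB"
proof -
  define code where "code xs = replicate (to_nat (xs :: 'x list)) True" for xs
  have "is_pow_proof f q (\<lambda>xs _. return_pmf (code xs)) (\<lambda>xs m. m = code xs)
          (\<lambda>ys m. \<exists>xs. m = code xs \<and> fpow f xs ys = replicate q True)"
    by (auto simp: is_proof_def code_def)
  then show ?thesis by blast
qed

definition list_joint_pmf ::
  "('x \<times> 'y) pmf \<Rightarrow> nat \<Rightarrow> ('x list \<Rightarrow> 'y list \<Rightarrow> 'm pmf) \<Rightarrow> (('x \<times> 'y) list \<times> 'm) pmf" where
  "list_joint_pmf mu q M =
     bind_pmf (replicate_pmf q mu) (\<lambda>zs. map_pmf (Pair zs) (M (map fst zs) (map snd zs)))"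

lemma joint_pmf_pmf_pow:
  "joint_pmf (pmf_pow mu q) M
     = map_pmf (\<lambda>(zs, m). ((map fst zs, map snd zs), m)) (list_joint_pmf mu q M)"
  by (simp add: joint_pmf_def pmf_pow_def list_joint_pmf_def bind_map_pmf map_bind_pmf map_pmf_comp)

lemma map_fst_list_joint_pmf: "map_pmf fst (list_joint_pmf mu q M) = replicate_pmf q mu"
  by (simp add: list_joint_pmf_def map_bind_pmf map_pmf_comp bind_return_pmf')

lemma finite_set_list_joint_pmf:
  fixes mu :: "('x::finite \<times> 'y::finite) pmf"
  assumes "\<And>zs. length zs = q \<Longrightarrow> finite (set_pmf (M (map fst zs) (map snd zs)))"
  shows "finite (set_pmf (list_joint_pmf mu q M))"
  using assms finite_set_pmf_replicate_pmf
  by (auto simp: list_joint_pmf_def dest!: set_pmf_replicate_pmfD)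

definition expected_length ::
  "('x \<times> 'y) pmf \<Rightarrow> nat \<Rightarrow> ('x list \<Rightarrow> 'y list \<Rightarrow> bool list pmf) \<Rightarrow> real" where
  "expected_length mu q M = measure_pmf.expectation (joint_pmf (pmf_pow mu q) M) (\<lambda>(_, m). real (length m))"

lemma expected_length_list_joint_pmf:
  "expected_length mu q M = measure_pmf.expectation (list_joint_pmf mu q M) (\<lambda>(_, m). real (length m))"
  by (simp add: expected_length_def joint_pmf_pmf_pow case_prod_unfold)

lemma expected_length_nonneg: "expected_length mu q M \<ge> 0"
  unfolding expected_length_def by (intro integral_nonneg_AE) (auto simp: case_prod_unfold)

lemma expected_length_eq_iterated:
  fixes mu :: "('x::finite \<times> 'y::finite) pmf"
  assumes "\<And>zs. length zs = q \<Longrightarrow> finite (set_pmf (M (map fst zs) (map snd zs)))"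
  shows "expected_length mu q M = measure_pmf.expectation (replicate_pmf q mu)
           (\<lambda>zs. measure_pmf.expectation (M (map fst zs) (map snd zs)) (\<lambda>m. real (length m)))"
  unfolding expected_length_list_joint_pmf list_joint_pmf_def using assms
  by (subst expectation_bind_pmf_finite)
    (auto simp: finite_set_pmf_replicate_pmf case_prod_unfold dest: set_pmf_replicate_pmfD)

section \<open>Planting a single instance into a $q$-fold proof\<close>

definition unary_tag :: "nat \<Rightarrow> bool list \<Rightarrow> bool list" where
  "unary_tag n m = replicate n True @ False # m"

lemma unary_tag_eq_iff [simp]: "unary_tag n m = unary_tag n' m' \<longleftrightarrow> n = n' \<and> m = m'"
proof (induction n arbitrary: n')
  case 0
  then show ?case by (cases n') (auto simp: unary_tag_def)
next
  case (Suc n)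
  then show ?case by (cases n') (auto simp: unary_tag_def)
qed

lemma set_pmf_of_set_lessThan [simp]: "(q::nat) > 0 \<Longrightarrow> set_pmf (pmf_of_set {..<q}) = {..<q}"
  by (intro set_pmf_of_set) auto

definition planted_pmf ::
  "('x \<times> 'y) pmf \<Rightarrow> nat \<Rightarrow> ('x list \<Rightarrow> 'y list \<Rightarrow> 'm pmf) \<Rightarrow> nat \<Rightarrow> 'x \<times> 'y \<Rightarrow> 'm pmf" where
  "planted_pmf mu q M j z =
     bind_pmf (replicate_pmf (q - 1) mu)
       (\<lambda>ws. M (map fst (insert_at j z ws)) (map snd (insert_at j z ws)))"

definition planted_msg ::
  "('x \<times> 'y) pmf \<Rightarrow> nat \<Rightarrow> ('x list \<Rightarrow> 'y list \<Rightarrow> bool list pmf) \<Rightarrow> 'x \<Rightarrow> 'y \<Rightarrow> bool list pmf" where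
  "planted_msg mu q M x y =
     bind_pmf (pmf_of_set {..<q}) (\<lambda>j. map_pmf (unary_tag j) (planted_pmf mu q M j (x, y)))"

text \<open>
  The tag fixes \<open>j\<close> and \<open>m\<close> for both parties, so both accept only completions of their inputs
  at the same position for the same message; soundness is inherited from the \<open>q\<close>-fold proof.
\<close>

definition planted_acc :: "nat \<Rightarrow> ('a list \<Rightarrow> bool list \<Rightarrow> bool) \<Rightarrow> 'a \<Rightarrow> bool list \<Rightarrow> bool" where
  "planted_acc q Acc a m' \<longleftrightarrow>
     (\<exists>j m as. m' = unary_tag j m \<and> j < q \<and> length as = q \<and> as ! j = a \<and> Acc as m)"

lemma is_proof_planted:
  fixes f :: "'x::finite \<Rightarrow> 'y::finite \<Rightarrow> bool"
  assumes supp: "set_pmf mu \<subseteq> {(x, y). f x y}" and q: "q > 0"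
    and P: "is_pow_proof f q M AccA AccB"
  shows "is_proof UNIV UNIV f True (planted_msg mu q M) (planted_acc q AccA) (planted_acc q AccB)"
  unfolding is_proof_def
proof (intro ballI conjI impI allI)
  fix x y
  have fin: "finite (set_pmf (M (map fst zs) (map snd zs)))" if "length zs = q" for zs
    using is_proof_finite[OF P] that by simp
  have "finite (set_pmf (planted_pmf mu q M j (x, y)))" if "j < q" for j
    using that fin q
    by (auto simp: planted_pmf_def finite_set_pmf_replicate_pmf intro!: finite_UN_I
        dest!: set_pmf_replicate_pmfD)
  then show "finite (set_pmf (planted_msg mu q M x y))" using q by (simp add: planted_msg_def)
next
  fix x y m' assume "f x y = True" and m': "m' \<in> set_pmf (planted_msg mu q M x y)"
  then obtain j ws m where j: "j < q" and m'_eq: "m' = unary_tag j m"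
    and ws: "ws \<in> set_pmf (replicate_pmf (q - 1) mu)"
    and m: "m \<in> set_pmf (M (map fst (insert_at j (x, y) ws)) (map snd (insert_at j (x, y) ws)))"
    using q by (auto simp: planted_msg_def planted_pmf_def)
  define zs where "zs = insert_at j (x, y) ws"
  have len: "length zs = q" and nth: "zs ! j = (x, y)"
    using set_pmf_replicate_pmfD[OF ws] j q by (simp_all add: zs_def)
  have "set zs \<subseteq> {(x, y). f x y}"
    using set_pmf_replicate_pmfD[OF ws] supp \<open>f x y = True\<close> by (auto simp: zs_def)
  then have "fpow f (map fst zs) (map snd zs) = replicate q True"
    using len by (subst fpow_eq_replicate_True_iff) (auto dest!: nth_mem)
  moreover have "m \<in> set_pmf (M (map fst zs) (map snd zs))" using m by (simp add: zs_def)
  ultimately have "AccA (map fst zs) m \<and> AccB (map snd zs) m"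
    using P[unfolded is_proof_def, rule_format, of "map fst zs" "map snd zs"] len by auto
  then show "planted_acc q AccA x m'" "planted_acc q AccB y m'"
    unfolding planted_acc_def using len nth j m'_eq by (metis length_map nth_map prod.sel)+
next
  fix x y m' assume "f x y \<noteq> True"
  show "\<not> planted_acc q AccA x m' \<or> \<not> planted_acc q AccB y m'"
  proof (rule ccontr)
    assume "\<not> ?thesis"
    then obtain j m xs ys where "j < q" "length xs = q" "xs ! j = x" "AccA xs m"
      "length ys = q" "ys ! j = y" "AccB ys m"
      unfolding planted_acc_def by auto
    then show False using P \<open>f x y \<noteq> True\<close> unfolding is_proof_def
      by (auto simp: fpow_eq_replicate_True_iff)
  qed
qed

lemma coordinate_list_joint_pmf:
  assumes j: "j < q"
  shows "coordinate_pmf j (list_joint_pmf mu q M) = joint_pmf mu (\<lambda>x y. planted_pmf mu q M j (x, y))"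
proof -
  let ?M = "\<lambda>zs. M (map fst zs) (map snd zs)"
  have "list_joint_pmf mu q M = bind_pmf mu (\<lambda>z. bind_pmf (replicate_pmf (q - 1) mu)
      (\<lambda>ws. map_pmf (Pair (insert_at j z ws)) (?M (insert_at j z ws))))"
    using replicate_pmf_insert_at[of j "q - 1" mu] j
    by (simp add: list_joint_pmf_def bind_map_pmf bind_assoc_pmf)
  then have "coordinate_pmf j (list_joint_pmf mu q M) = bind_pmf mu (\<lambda>z. bind_pmf (replicate_pmf (q - 1) mu)
      (\<lambda>ws. map_pmf (\<lambda>m. (insert_at j z ws ! j, m)) (?M (insert_at j z ws))))"
    by (simp add: coordinate_pmf_def map_bind_pmf map_pmf_comp)
  also have "\<dots> = bind_pmf mu (\<lambda>z. bind_pmf (replicate_pmf (q - 1) mu)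
      (\<lambda>ws. map_pmf (\<lambda>m. (z, m)) (?M (insert_at j z ws))))"
    using j by (intro bind_pmf_cong refl) (auto dest!: set_pmf_replicate_pmfD)
  also have "\<dots> = joint_pmf mu (\<lambda>x y. planted_pmf mu q M j (x, y))"
    by (simp add: joint_pmf_def planted_pmf_def map_bind_pmf case_prod_unfold)
  finally show ?thesis .
qed

lemma joint_pmf_planted_msg:
  "joint_pmf mu (planted_msg mu q M) = map_pmf (\<lambda>(u, (j, m)). (u, unary_tag j m))
     (bind_pmf (pmf_of_set {..<q})
        (\<lambda>j. map_pmf (\<lambda>(z, m). (z, (j, m))) (joint_pmf mu (\<lambda>x y. planted_pmf mu q M j (x, y)))))"
proof -
  have "joint_pmf mu (planted_msg mu q M) = bind_pmf mu (\<lambda>z. bind_pmf (pmf_of_set {..<q})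
      (\<lambda>j. map_pmf (\<lambda>m. (z, unary_tag j m)) (planted_pmf mu q M j z)))"
    by (simp add: joint_pmf_def planted_msg_def map_bind_pmf map_pmf_comp case_prod_unfold)
  also have "\<dots> = bind_pmf (pmf_of_set {..<q}) (\<lambda>j. bind_pmf mu
      (\<lambda>z. map_pmf (\<lambda>m. (z, unary_tag j m)) (planted_pmf mu q M j z)))"
    by (rule bind_commute_pmf)
  finally show ?thesis
    by (simp add: joint_pmf_def map_bind_pmf map_pmf_comp case_prod_unfold)
qed

lemma mutual_info_planted_msg:
  fixes mu :: "('x::finite \<times> 'y::finite) pmf"
  assumes q: "q > 0" and fin: "finite (set_pmf (list_joint_pmf mu q M))"
  shows "real q * mutual_info_pmf (joint_pmf mu (planted_msg mu q M))
       = (\<Sum>j<q. mutual_info_pmf (coordinate_pmf j (list_joint_pmf mu q M)))"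
proof -
  define D where "D j = coordinate_pmf j (list_joint_pmf mu q M)" for j
  have inj: "inj (\<lambda>(j, m). unary_tag j m)" by (auto simp: inj_def)
  have marg: "map_pmf fst (D j) = mu" if "j < q" for j
    using map_pmf_nth_replicate_pmf[OF that]
    by (simp add: D_def map_fst_coordinate_pmf map_fst_list_joint_pmf)
  have fin_D: "finite (set_pmf (D j))" for j
    using fin by (simp add: D_def coordinate_pmf_def)
  have "bind_pmf (pmf_of_set {..<q})
      (\<lambda>j. map_pmf (\<lambda>(z, m). (z, (j, m))) (joint_pmf mu (\<lambda>x y. planted_pmf mu q M j (x, y))))
    = bind_pmf (pmf_of_set {..<q}) (\<lambda>j. map_pmf (\<lambda>(z, m). (z, (j, m))) (D j))"
    using q by (intro bind_pmf_cong refl) (simp add: D_def coordinate_list_joint_pmf)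
  then have "mutual_info_pmf (joint_pmf mu (planted_msg mu q M))
      = mutual_info_pmf (bind_pmf (pmf_of_set {..<q}) (\<lambda>j. map_pmf (\<lambda>(z, m). (z, (j, m))) (D j)))"
    using mutual_info_pmf_map_snd_inj[OF inj] by (simp add: joint_pmf_planted_msg case_prod_unfold)
  also have "\<dots> = (\<Sum>j<q. mutual_info_pmf (D j)) / q"
    using q fin_D marg by (subst mutual_info_pmf_mixture) auto
  finally show ?thesis using q by (simp add: D_def)
qed

lemma mutual_info_planted_msg_le:
  fixes mu :: "('x::finite \<times> 'y::finite) pmf"
  assumes q: "q > 0" and fin: "finite (set_pmf (list_joint_pmf mu q M))" and t: "0 < t" "t < 1/2"
  shows "real q * mutual_info_pmf (joint_pmf mu (planted_msg mu q M))
       \<le> log 2 (1/t) * expected_length mu q M - log 2 (1 - 2*t)"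
proof -
  define J where "J = list_joint_pmf mu q M"
  define w where "w m = (1 - 2*t) * t ^ length m" for m :: "bool list"
  have int: "integrable (measure_pmf J) g" for g :: "_ \<Rightarrow> real"
    using fin by (simp add: J_def integrable_measure_pmf_finite)
  have "real q * mutual_info_pmf (joint_pmf mu (planted_msg mu q M))
      \<le> measure_pmf.expectation J (\<lambda>(zs, m). - log 2 (w m))"
    unfolding mutual_info_planted_msg[OF q fin] J_def
    using t fin by (intro sum_mutual_info_coordinate_le[where mu=mu] map_fst_list_joint_pmf)
      (auto simp: w_def intro: sum_geometric_length_weight_le)
  also have "\<dots> = measure_pmf.expectation J (\<lambda>(zs, m). log 2 (1/t) * real (length m) - log 2 (1 - 2*t))"
    by (intro Bochner_Integration.integral_cong refl)
      (use t in \<open>auto simp: w_def log_mult log_nat_power log_divide\<close>)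
  also have "\<dots> = log 2 (1/t) * expected_length mu q M - log 2 (1 - 2*t)"
    by (simp add: expected_length_list_joint_pmf J_def[symmetric] case_prod_unfold
        Bochner_Integration.integral_diff[OF int int])
  finally show ?thesis .
qed

section \<open>Concatenating proofs\<close>

function block_code :: "nat \<Rightarrow> bool list \<Rightarrow> bool list" where
  "block_code b m = (if b = 0 \<or> length m < b then False # unary_tag (length m) m
                     else True # take b m @ block_code b (drop b m))"
  by pat_completeness auto
termination by (relation "Wellfounded.measure (\<lambda>(b, m). length m)") auto

declare block_code.simps [simp del]

lemma block_code_append_eq:
  "block_code b u @ v = block_code b u' @ v' \<Longrightarrow> u = u' \<and> v = v'"
proof (induction b u arbitrary: u' v v' rule: block_code.induct)
  case (1 b u)
  consider "b = 0 \<or> length u < b" "b = 0 \<or> length u' < b"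
    | "\<not> (b = 0 \<or> length u < b)" "\<not> (b = 0 \<or> length u' < b)"
    | "(b = 0 \<or> length u < b) \<noteq> (b = 0 \<or> length u' < b)"
    by blast
  then show ?case
  proof cases
    case 1
    then have "unary_tag (length u) (u @ v) = unary_tag (length u') (u' @ v')"
      using "1.prems" by (simp add: block_code.simps[of b u] block_code.simps[of b u'] unary_tag_def)
    then show ?thesis by (metis append_eq_append_conv unary_tag_eq_iff)
  next
    case 2
    then have "take b u @ (block_code b (drop b u) @ v) = take b u' @ (block_code b (drop b u') @ v')"
      using "1.prems" by (simp add: block_code.simps[of b u] block_code.simps[of b u'])
    moreover have "length (take b u) = length (take b u')" using 2 by simp
    ultimately have "take b u = take b u'" "block_code b (drop b u) @ v = block_code b (drop b u') @ v'"
      by (auto simp: append_eq_append_conv)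
    with "1.IH"[OF 2(1)] show ?thesis by (metis append_take_drop_id)
  next
    case 3
    then show ?thesis
      using "1.prems" by (auto simp: block_code.simps[of b u] block_code.simps[of b u'])
  qed
qed

lemma length_block_code_le:
  "b > 0 \<Longrightarrow> real (length (block_code b m)) \<le> real (length m) * (1 + 1/b) + 2 * real b"
proof (induction b m rule: block_code.induct)
  case (1 b m)
  show ?case
  proof (cases "length m < b")
    case True
    then have "real (length (block_code b m)) = 2 + 2 * real (length m)"
      using "1.prems" by (simp add: block_code.simps[of b m] unary_tag_def)
    moreover have "2 + 2 * real (length m) \<le> real (length m) + 2 * b + real (length m) / b"
    proof -
      have "real (length m) + 1 \<le> b" "0 \<le> real (length m) / b" using True by auto
      then show ?thesis using "1.prems" by linarith
    qed
    ultimately show ?thesis by (simp add: algebra_simps)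
  next
    case False
    then have "real (length (block_code b m)) = 1 + real b + real (length (block_code b (drop b m)))"
      using "1.prems" by (simp add: block_code.simps[of b m])
    moreover have "real (length (block_code b (drop b m)))
        \<le> (real (length m) - b) * (1 + 1/b) + 2 * real b"
      using "1.IH" False "1.prems" by (simp add: of_nat_diff)
    moreover have "(real (length m) - b) * (1 + 1/b) = real (length m) * (1 + 1/b) - b - 1"
      using "1.prems" by (simp add: field_simps)
    ultimately show ?thesis by linarith
  qed
qed

definition concat_msg :: "nat \<Rightarrow> nat \<Rightarrow> ('x list \<Rightarrow> 'y list \<Rightarrow> bool list pmf)
    \<Rightarrow> ('x list \<Rightarrow> 'y list \<Rightarrow> bool list pmf) \<Rightarrow> 'x list \<Rightarrow> 'y list \<Rightarrow> bool list pmf" where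
  "concat_msg b p M1 M2 xs ys = bind_pmf (M1 (take p xs) (take p ys))
     (\<lambda>m1. map_pmf (\<lambda>m2. block_code b m1 @ m2) (M2 (drop p xs) (drop p ys)))"

definition concat_acc :: "nat \<Rightarrow> nat \<Rightarrow> ('a list \<Rightarrow> bool list \<Rightarrow> bool)
    \<Rightarrow> ('a list \<Rightarrow> bool list \<Rightarrow> bool) \<Rightarrow> 'a list \<Rightarrow> bool list \<Rightarrow> bool" where
  "concat_acc b p A1 A2 as m \<longleftrightarrow> (\<exists>u v. m = block_code b u @ v \<and> A1 (take p as) u \<and> A2 (drop p as) v)"

lemma is_proof_concat:
  assumes P1: "is_pow_proof f p M1 A1 B1"
    and P2: "is_pow_proof f r M2 A2 B2"
  shows "is_pow_proof f (p + r) (concat_msg b p M1 M2) (concat_acc b p A1 A2) (concat_acc b p B1 B2)"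
  unfolding is_proof_def
proof (intro ballI conjI impI allI)
  fix xs :: "'a list" and ys :: "'b list"
  assume "xs \<in> {xs. length xs = p + r}" "ys \<in> {ys. length ys = p + r}"
  then have len: "length xs = p + r" "length ys = p + r" by auto
  note P1' = P1[unfolded is_proof_def, rule_format, of "take p xs" "take p ys"]
  note P2' = P2[unfolded is_proof_def, rule_format, of "drop p xs" "drop p ys"]
  show "finite (set_pmf (concat_msg b p M1 M2 xs ys))"
    using P1' P2' len by (auto simp: concat_msg_def)
  show "concat_acc b p A1 A2 xs m" "concat_acc b p B1 B2 ys m"
    if "fpow f xs ys = replicate (p + r) True" "m \<in> set_pmf (concat_msg b p M1 M2 xs ys)" for m
    using that P1' P2' len unfolding concat_acc_def
    by (auto simp: concat_msg_def fpow_eq_replicate_add_iff)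
  show "\<not> concat_acc b p A1 A2 xs m \<or> \<not> concat_acc b p B1 B2 ys m"
    if "fpow f xs ys \<noteq> replicate (p + r) True" for m
    using that P1' P2' len unfolding concat_acc_def
    by (auto simp: fpow_eq_replicate_add_iff dest: block_code_append_eq)
qed

lemma expectation_length_block_concat_le:
  assumes fin: "finite (set_pmf X1)" "finite (set_pmf X2)" and b: "b > 0"
  shows "measure_pmf.expectation (bind_pmf X1 (\<lambda>m1. map_pmf (\<lambda>m2. block_code b m1 @ m2) X2))
           (\<lambda>m. real (length m))
         \<le> (1 + 1/b) * measure_pmf.expectation X1 (\<lambda>m. real (length m)) + 2 * real b
             + measure_pmf.expectation X2 (\<lambda>m. real (length m))"
proof -
  have int1: "integrable (measure_pmf X1) h" and int2: "integrable (measure_pmf X2) h'"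
    for h h' :: "bool list \<Rightarrow> real" using fin by (simp_all add: integrable_measure_pmf_finite)
  have "measure_pmf.expectation (bind_pmf X1 (\<lambda>m1. map_pmf (\<lambda>m2. block_code b m1 @ m2) X2))
          (\<lambda>m. real (length m))
      = measure_pmf.expectation X1 (\<lambda>m1. real (length (block_code b m1))
          + measure_pmf.expectation X2 (\<lambda>m. real (length m)))"
    using fin by (simp add: expectation_bind_pmf_finite Bochner_Integration.integral_add[OF int2 int2])
  also have "\<dots> \<le> measure_pmf.expectation X1 (\<lambda>m1. real (length m1) * (1 + 1/b) + 2 * real b
          + measure_pmf.expectation X2 (\<lambda>m. real (length m)))"
    using b by (intro integral_mono int1 add_right_mono length_block_code_le)
  finally show ?thesis
    by (simp add: Bochner_Integration.integral_add[OF int1 int1] mult.commute)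
qed

lemma expected_length_concat_le:
  fixes f :: "'x::finite \<Rightarrow> 'y::finite \<Rightarrow> bool" and mu :: "('x \<times> 'y) pmf"
  assumes P1: "is_pow_proof f p M1 A1 B1"
    and P2: "is_pow_proof f r M2 A2 B2"
    and b: "b > 0"
  shows "expected_length mu (p + r) (concat_msg b p M1 M2)
           \<le> (1 + 1/b) * expected_length mu p M1 + 2 * real b + expected_length mu r M2"
proof -
  define g :: "('x list \<Rightarrow> 'y list \<Rightarrow> bool list pmf) \<Rightarrow> ('x \<times> 'y) list \<Rightarrow> real"
    where "g M zs = measure_pmf.expectation (M (map fst zs) (map snd zs)) (\<lambda>m. real (length m))" for M zs
  have fin1: "finite (set_pmf (M1 (map fst zs) (map snd zs)))" if "length zs = p" for zs
    using is_proof_finite[OF P1] that by simp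
  have fin2: "finite (set_pmf (M2 (map fst zs) (map snd zs)))" if "length zs = r" for zs
    using is_proof_finite[OF P2] that by simp
  have fin: "finite (set_pmf (concat_msg b p M1 M2 (map fst zs) (map snd zs)))" if "length zs = p + r" for zs
    using is_proof_finite[OF is_proof_concat[OF P1 P2]] that by simp
  have int: "integrable (measure_pmf (replicate_pmf n mu)) h" for n and h :: "_ \<Rightarrow> real"
    by (simp add: finite_set_pmf_replicate_pmf integrable_measure_pmf_finite)
  have "expected_length mu (p + r) (concat_msg b p M1 M2)
      = measure_pmf.expectation (replicate_pmf (p + r) mu) (g (concat_msg b p M1 M2))"
    unfolding g_def using fin by (rule expected_length_eq_iterated)
  also have "\<dots> \<le> measure_pmf.expectation (replicate_pmf (p + r) mu)
      (\<lambda>zs. (1 + 1/b) * g M1 (take p zs) + 2 * real b + g M2 (drop p zs))"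
    using fin1 fin2 b
    by (intro integral_mono_AE int)
      (auto simp: AE_measure_pmf_iff g_def concat_msg_def take_map drop_map
        dest!: set_pmf_replicate_pmfD intro!: expectation_length_block_concat_le)
  also have "\<dots> = (1 + 1/b) * measure_pmf.expectation (map_pmf (take p) (replicate_pmf (p + r) mu)) (g M1)
      + 2 * real b + measure_pmf.expectation (map_pmf (drop p) (replicate_pmf (p + r) mu)) (g M2)"
    by (simp add: Bochner_Integration.integral_add[OF int int])
  also have "\<dots> = (1 + 1/b) * expected_length mu p M1 + 2 * real b + expected_length mu r M2"
    unfolding map_pmf_take_replicate_pmf map_pmf_drop_replicate_pmf g_def
    using fin1 fin2 by (simp add: expected_length_eq_iterated)
  finally show ?thesis .
qed

section \<open>Approximately subadditive sequences\<close>

lemma approx_subadditive_iterate: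
  fixes a :: "nat \<Rightarrow> real"
  assumes "\<And>p r. a (p + r) \<le> c * a p + d + a r"
  shows "a (k * p + r) \<le> real k * (c * a p + d) + a r"
proof (induction k)
  case 0
  then show ?case by simp
next
  case (Suc k)
  have "a (Suc k * p + r) = a (p + (k * p + r))" by (simp add: add.assoc)
  also have "\<dots> \<le> c * a p + d + a (k * p + r)" by (rule assms)
  finally show ?case using Suc.IH by (simp add: algebra_simps)
qed

context
  fixes a :: "nat \<Rightarrow> real"
  assumes nonneg: "\<And>n. a n \<ge> 0"
    and subadd: "\<And>b p r. b > 0 \<Longrightarrow> a (p + r) \<le> (1 + 1/b) * a p + 2 * real b + a r"
begin

lemma approx_subadditive_ratio_le: "a n / n \<le> 2 * a 1 + 2 + a 0"
proof (cases "n = 0")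
  case True
  then show ?thesis using nonneg[of 0] nonneg[of 1] by simp
next
  case False
  have "a (n * 1 + 0) \<le> real n * ((1 + 1 / real (1::nat)) * a 1 + 2 * real (1::nat)) + a 0"
    using subadd[of 1] by (intro approx_subadditive_iterate) auto
  also have "\<dots> \<le> real n * (2 * a 1 + 2 + a 0)"
    using False nonneg[of 0] by (simp add: algebra_simps mult_le_cancel_right1)
  finally show ?thesis using False by (simp add: field_simps)
qed

lemma approx_subadditive_eventually_le:
  assumes e: "e > 0"
  shows "\<exists>P. \<forall>p\<ge>P. eventually (\<lambda>n. a n / n \<le> a p / p + e) sequentially"
proof -
  define C where "C = 2 * a 1 + 2 + a 0"
  define b :: nat where "b = nat \<lceil>3 * C / e\<rceil> + 1"
  have b: "b > 0" by (simp add: b_def)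
  have "3 * C / e \<le> real b" unfolding b_def by linarith
  then have bC: "C / b \<le> e / 3" using b e by (simp add: field_simps)
  define P :: nat where "P = nat \<lceil>6 * b / e\<rceil> + 1"
  have "eventually (\<lambda>n. a n / n \<le> a p / p + e) sequentially" if pP: "P \<le> p" for p
  proof -
    have p: "p > 0" using pP by (simp add: P_def)
    have "6 * real b / e \<le> real p" using pP unfolding P_def by linarith
    then have bp: "2 * real b / p \<le> e / 3" using p e by (simp add: field_simps)
    define R where "R = (\<Sum>r<p. a r)"
    define X where "X = (1 + 1/b) * a p + 2 * real b"
    have X: "X \<ge> 0" using nonneg[of p] by (simp add: X_def)
    have "a n / n \<le> a p / p + e" if nN: "n \<ge> nat \<lceil>3 * R / e\<rceil> + 1" for n
    proof -
      have n: "n > 0" using nN by simp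
      have "3 * R / e \<le> real n" using nN by linarith
      then have Rn: "R / n \<le> e / 3" using n e by (simp add: field_simps)
      have "a (n div p * p + n mod p) \<le> real (n div p) * X + a (n mod p)"
        unfolding X_def using subadd[OF b(1)] by (rule approx_subadditive_iterate)
      also have "a (n mod p) \<le> R"
        using p nonneg unfolding R_def by (intro member_le_sum sum_nonneg) auto
      finally have "a n \<le> real (n div p) * X + R" by simp
      also have "\<dots> \<le> n / p * X + R"
      proof -
        have "real (n div p) * real p \<le> real n"
          by (metis div_times_less_eq_dividend of_nat_le_iff of_nat_mult)
        then have "real (n div p) \<le> n / p" using p by (simp add: field_simps)
        then show ?thesis using X by (intro add_right_mono mult_right_mono)
      qed
      finally have "a n / n \<le> (n / p * X + R) / n" using n by (simp add: divide_right_mono)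
      also have "\<dots> = X / p + R / n" using n p by (simp add: field_simps)
      also have "X / p = a p / p + (a p / p) / b + 2 * real b / p"
        using p b by (simp add: X_def field_simps)
      also have "(a p / p) / b \<le> C / b"
        using approx_subadditive_ratio_le[of p] unfolding C_def by (rule divide_right_mono) simp
      finally show ?thesis using bC bp Rn by linarith
    qed
    then show ?thesis unfolding eventually_sequentially by blast
  qed
  then show ?thesis by blast
qed

lemma approx_subadditive_convergent: "convergent (\<lambda>n. a n / n)"
proof -
  define s where "s n = a n / n" for n
  define Ls where "Ls = limsup (\<lambda>n. ereal (s n))"
  define Li where "Li = liminf (\<lambda>n. ereal (s n))"
  have "Ls \<le> ereal (2 * a 1 + 2 + a 0)"
    unfolding Ls_def s_def
    using approx_subadditive_ratio_le by (intro Limsup_bounded always_eventually) auto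
  moreover have "ereal 0 \<le> Li"
    unfolding Li_def s_def using nonneg by (intro Liminf_bounded) simp
  moreover have "Li \<le> Ls" unfolding Li_def Ls_def by (intro Liminf_le_Limsup) simp
  ultimately obtain ls li where ls: "Ls = ereal ls" and li: "Li = ereal li"
    by (cases Ls; cases Li) auto
  have "ls \<le> li"
  proof (rule field_le_epsilon)
    fix e :: real assume "e > 0"
    then obtain P where P: "\<forall>p\<ge>P. eventually (\<lambda>n. s n \<le> s p + e) sequentially"
      using approx_subadditive_eventually_le unfolding s_def by blast
    have "eventually (\<lambda>p. ereal (ls - e) \<le> ereal (s p)) sequentially"
    proof (rule eventually_sequentiallyI)
      fix p assume "P \<le> p"
      then have "Ls \<le> ereal (s p + e)" unfolding Ls_def using P by (intro Limsup_bounded) auto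
      then show "ereal (ls - e) \<le> ereal (s p)" using ls by simp
    qed
    then have "ereal (ls - e) \<le> Li" unfolding Li_def by (rule Liminf_bounded)
    then show "ls \<le> li + e" using li by simp
  qed
  then have "s \<longlonglongrightarrow> ls"
    using ls li by (intro limsup_le_liminf_real) (auto simp: Ls_def Li_def)
  then show ?thesis unfolding convergent_def s_def[abs_def] by blast
qed

end

section \<open>Communication versus information\<close>

context
  fixes f :: "'x::finite \<Rightarrow> 'y::finite \<Rightarrow> bool" and mu :: "('x \<times> 'y) pmf"
begin

lemma CC_pow_eq_Inf:
  "CC_pow f mu q = Inf {expected_length mu q M | M AccA AccB. is_pow_proof f q M AccA AccB}"
  by (simp add: CC_pow_def expected_length_def)

lemma CC_pow_le: "is_pow_proof f q M AccA AccB \<Longrightarrow> CC_pow f mu q \<le> expected_length mu q M"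
  unfolding CC_pow_eq_Inf by (rule cInf_lower) (auto intro!: bdd_belowI[of _ 0] expected_length_nonneg)

lemma CC_pow_nonneg: "CC_pow f mu q \<ge> 0"
  unfolding CC_pow_eq_Inf using exists_pow_proof[where f=f and q=q]
  by (intro cInf_greatest) (auto intro: expected_length_nonneg)

lemma CC_pow_approx:
  assumes "e > 0"
  obtains M AccA AccB where "is_pow_proof f q M AccA AccB" "expected_length mu q M < CC_pow f mu q + e"
proof -
  have "{expected_length mu q M | M AccA AccB. is_pow_proof f q M AccA AccB} \<noteq> {}"
    using exists_pow_proof[where f=f and q=q] by blast
  from cInf_lessD[OF this, of "CC_pow f mu q + e"] show ?thesis
    using assms that by (auto simp: CC_pow_eq_Inf)
qed

lemma CC_pow_add_le:
  assumes b: "b > 0"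
  shows "CC_pow f mu (p + r) \<le> (1 + 1/b) * CC_pow f mu p + 2 * real b + CC_pow f mu r"
proof (rule field_le_epsilon)
  fix e :: real assume e: "e > 0"
  define e' where "e' = e / (2 + 1/b)"
  have pos: "2 + 1 / real b > 0" by (simp add: add_pos_nonneg)
  then have e': "e' > 0" using e by (simp add: e'_def)
  have "(1 + 1/b) * e' + e' = (2 + 1 / real b) * e'" by (simp add: algebra_simps)
  then have e'_eq: "(1 + 1/b) * e' + e' = e" using pos by (simp add: e'_def)
  obtain M1 A1 B1 where P1: "is_pow_proof f p M1 A1 B1"
    and E1: "expected_length mu p M1 < CC_pow f mu p + e'" using CC_pow_approx[OF e'] .
  obtain M2 A2 B2 where P2: "is_pow_proof f r M2 A2 B2"
    and E2: "expected_length mu r M2 < CC_pow f mu r + e'" using CC_pow_approx[OF e'] .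
  have "CC_pow f mu (p + r) \<le> expected_length mu (p + r) (concat_msg b p M1 M2)"
    using is_proof_concat[OF P1 P2] by (rule CC_pow_le)
  also have "\<dots> \<le> (1 + 1/b) * expected_length mu p M1 + 2 * real b + expected_length mu r M2"
    using P1 P2 b by (rule expected_length_concat_le)
  also have "\<dots> \<le> (1 + 1/b) * (CC_pow f mu p + e') + 2 * real b + (CC_pow f mu r + e')"
    using E1 E2 by (intro add_mono mult_left_mono) auto
  finally show "CC_pow f mu (p + r) \<le> (1 + 1/b) * CC_pow f mu p + 2 * real b + CC_pow f mu r + e"
    using e'_eq by (simp add: algebra_simps)
qed

lemma IC_ext1_le_mutual_info: "is_proof UNIV UNIV f True M AccA AccB \<Longrightarrow> IC_ext1 f mu \<le> mutual_info_pmf (joint_pmf mu M)"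
  unfolding IC_ext1_def by (rule cInf_lower) (auto intro!: bdd_belowI[of _ 0] mutual_info_pmf_nonneg)

lemma IC_ext1_le_CC_pow:
  assumes supp: "set_pmf mu \<subseteq> {(x, y). f x y}" and q: "q > 0" and t: "0 < t" "t < 1/2"
  shows "real q * IC_ext1 f mu \<le> log 2 (1/t) * CC_pow f mu q - log 2 (1 - 2*t)"
proof (rule field_le_epsilon)
  fix e :: real assume e: "e > 0"
  have log_pos: "log 2 (1/t) > 0" using t by simp
  obtain M A B where P: "is_pow_proof f q M A B"
    and E: "expected_length mu q M < CC_pow f mu q + e / log 2 (1/t)"
    using CC_pow_approx e log_pos by (metis divide_pos_pos)
  have fin: "finite (set_pmf (M (map fst zs) (map snd zs)))" if "length zs = q" for zs
    using is_proof_finite[OF P] that by simp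
  have "real q * IC_ext1 f mu \<le> real q * mutual_info_pmf (joint_pmf mu (planted_msg mu q M))"
    using IC_ext1_le_mutual_info[OF is_proof_planted[OF supp q P]] by (simp add: mult_left_mono)
  also have "\<dots> \<le> log 2 (1/t) * expected_length mu q M - log 2 (1 - 2*t)"
    using fin q t by (intro mutual_info_planted_msg_le finite_set_list_joint_pmf)
  also have "\<dots> \<le> log 2 (1/t) * (CC_pow f mu q + e / log 2 (1/t)) - log 2 (1 - 2*t)"
    using E log_pos by (intro diff_right_mono mult_left_mono) auto
  finally show "real q * IC_ext1 f mu \<le> log 2 (1/t) * CC_pow f mu q - log 2 (1 - 2*t) + e"
    using log_pos by (simp add: algebra_simps)
qed

end

lemma le_of_le_log_inverse_mult:
  fixes x L :: real
  assumes le: "\<And>t. 0 < t \<Longrightarrow> t < 1/2 \<Longrightarrow> x \<le> log 2 (1/t) * L"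
  shows "x \<le> L"
proof (rule tendsto_le[OF trivial_limit_at_left_real])
  have "((\<lambda>t. log 2 (1/t) * L) \<longlongrightarrow> log 2 (1 / (1/2)) * L) (at (1/2 :: real))"
    by (intro tendsto_intros) auto
  then show "((\<lambda>t. log 2 (1/t) * L) \<longlongrightarrow> L) (at_left (1/2))"
    by (simp add: filterlim_at_split)
  show "((\<lambda>_. x) \<longlongrightarrow> x) (at_left (1/2))" by simp
  show "eventually (\<lambda>t. x \<le> log 2 (1/t) * L) (at_left (1/2))"
  proof -
    have "eventually (\<lambda>t. t \<in> {0<..<1/2}) (at_left (1/2 :: real))"
      by (rule eventually_at_left_real) simp
    then show ?thesis by eventually_elim (auto intro: le)
  qed
qed

lemma IC_ext1_le_lim_CC_pow:
  fixes f :: "'x::finite \<Rightarrow> 'y::finite \<Rightarrow> bool" and mu :: "('x \<times> 'y) pmf"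
  assumes supp: "set_pmf mu \<subseteq> {(x, y). f x y}" and t: "0 < t" "t < 1/2"
    and lim: "(\<lambda>q. CC_pow f mu q / real q) \<longlonglongrightarrow> L"
  shows "IC_ext1 f mu \<le> log 2 (1/t) * L"
proof (rule tendsto_le[OF trivial_limit_sequentially _ tendsto_const])
  show "(\<lambda>q. log 2 (1/t) * (CC_pow f mu q / real q) - log 2 (1 - 2*t) / real q)
          \<longlonglongrightarrow> log 2 (1/t) * L"
    using tendsto_diff[OF tendsto_mult_left[OF lim] lim_const_over_n] by simp
  show "eventually (\<lambda>q. IC_ext1 f mu \<le> log 2 (1/t) * (CC_pow f mu q / real q) - log 2 (1 - 2*t) / real q)
          sequentially"
  proof (rule eventually_sequentiallyI[of 1])
    fix q :: nat assume "1 \<le> q"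
    then show "IC_ext1 f mu \<le> log 2 (1/t) * (CC_pow f mu q / real q) - log 2 (1 - 2*t) / real q"
      using IC_ext1_le_CC_pow[OF supp _ t, of q] by (simp add: field_simps)
  qed
qed

theorem theorem1p1:
  fixes f :: "'x::finite \<Rightarrow> 'y::finite \<Rightarrow> bool"
    and mu :: "('x \<times> 'y) pmf"
  assumes "set_pmf mu \<subseteq> {(x, y). f x y}"
  shows "convergent (\<lambda>q. CC_pow f mu q / real q)
         \<and> IC_ext1 f mu \<le> lim (\<lambda>q. CC_pow f mu q / real q)"
proof
  show "convergent (\<lambda>q. CC_pow f mu q / real q)"
    by (rule approx_subadditive_convergent[OF CC_pow_nonneg CC_pow_add_le])
  then have lim: "(\<lambda>q. CC_pow f mu q / real q) \<longlonglongrightarrow> lim (\<lambda>q. CC_pow f mu q / real q)"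
    by (simp add: convergent_LIMSEQ_iff)
  show "IC_ext1 f mu \<le> lim (\<lambda>q. CC_pow f mu q / real q)"
    by (rule le_of_le_log_inverse_mult) (rule IC_ext1_le_lim_CC_pow[OF assms _ _ lim])
qed

end
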